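(* Let $(\mathbf C,I)$ be a finite-type based chain complex of real inner product spaces, let $M$ be an $(n,n-1)$-free Morse matching on it with Morse retraction $\Phi:\mathbf D\to\mathbf C$, $\Psi:\mathbf C\to\mathbf D$ where $\mathbf D=\mathbf C^M$, and let $M'$ be an $(n,n-1)$-free Morse matching on the based complex $\mathbf D$ with Morse retraction $\Phi':\mathbf E\to\mathbf D$, $\Psi':\mathbf D\to\mathbf E$ where $\mathbf E=\mathbf D^{M'}$. Then for all $s\in\mathbf C_n$, $$\mathcal L_s(\Psi'\Psi,\Phi\Phi')\le\mathcal L_s(\Psi,\Phi)+\mathcal L_{\Psi(s)}(\Psi',\Phi'),$$ i.e. $\lVert s-\Phi\Phi'\Psi'\Psi s\rVert_{\mathbf C_n}\le\lVert s-\Phi\Psi s\rVert_{\mathbf C_n}+\lVert\Psi s-\Phi'\Psi'\Psi s\rVert_{\mathbf D_n}$.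
   Context: Based chain complex: chain complex $(\mathbf C,\partial)$ of finite-dimensional real inner product spaces $\mathbf C_n$, $n\ge0$, with disjoint finite index sets $I_n$ and $\mathbf C_n=\bigoplus_{\alpha\in I_n}C_\alpha$; $\partial_{\beta,\alpha}=\pi_\beta\partial_n i_\alpha$. Graph: edges $\alpha\to\beta$ when $\partial_{\beta,\alpha}\ne0$. Morse matching: edge set $M$ with each cell on at most one edge, $\partial_{\beta,\alpha}$ an isomorphism for $\alpha\to\beta\in M$, and "directed path from $\alpha$ to $\beta$ in the graph with $M$ reversed" a partial order on each $I_n$; $M^0$ = unmatched cells; $(n,n-1)$-free means no edge of $M$ joins an $n$-cell to an $(n-1)$-cell. With $\Gamma_{\beta,\alpha}$ the sum over directed paths from $\alpha$ to $\beta$ in the reversed graph of composites of $\partial_{\sigma_{i+1},\sigma_i}$ (ordinary steps) and $-\partial_{\sigma_i,\sigma_{i+1}}^{-1}$ (reversed matched edges): Morse complex $\mathbf C^M_n=\bigoplus_{\alpha\in I_n\cap M^0}C_\alpha$ (based by $I\cap M^0$, restricted inner product) with boundary $\sum_{\beta\in M^0\cap I_{n-1}}\Gamma_{\beta,\alpha}$; Morse retraction $\Phi=\sum_{\beta\in I_n}\Gamma_{\beta,\alpha}$ on critical $C_\alpha$, $\Psi=\sum_{\beta\in M^0\cap I_n}\Gamma_{\beta,\alpha}$ on $C_\alpha$. For chain maps $\Phi,\Psi$ and a signal $s$, the topological loss is $\mathcal L_s(\Psi,\Phi)=\lVert s-\Phi\Psi s\rVert$. *)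

theory Defs
  imports "HOL-Analysis.Inner_Product"
begin

text \<open>
A based chain complex is modelled inside one real inner product space 'v:
a set of cells I, a degree function deg, for every cell a subspace sp c of 'v
(the summand C_c), and a linear boundary map bd on 'v.
The degree-n chain space C_n is the (direct) sum of the sp c with deg c = n.
\<close>

definition chain_space :: "'a set \<Rightarrow> ('a \<Rightarrow> nat) \<Rightarrow> ('a \<Rightarrow> 'v::real_vector set) \<Rightarrow> nat \<Rightarrow> 'v set" where
  "chain_space I deg sp n = span (\<Union>{sp c |c. c \<in> I \<and> deg c = n})"

definition total_space :: "'a set \<Rightarrow> ('a \<Rightarrow> 'v::real_vector set) \<Rightarrow> 'v set" where
  "total_space I sp = span (\<Union>(sp ` I))"

definition proj :: "'a set \<Rightarrow> ('a \<Rightarrow> 'v::real_vector set) \<Rightarrow> 'a \<Rightarrow> 'v \<Rightarrow> 'v" where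
  "proj I sp b x = (THE f. (\<forall>c\<in>I. f c \<in> sp c) \<and> (\<forall>c. c \<notin> I \<longrightarrow> f c = 0)
                          \<and> x = (\<Sum>c\<in>I. f c)) b"

text \<open>Block partial_{b,a} = pi_b o bd o i_a (as a map on 'v, meant on sp a).\<close>
definition blk :: "'a set \<Rightarrow> ('a \<Rightarrow> 'v::real_vector set) \<Rightarrow> ('v \<Rightarrow> 'v) \<Rightarrow> 'a \<Rightarrow> 'a \<Rightarrow> 'v \<Rightarrow> 'v" where
  "blk I sp bd b a = (\<lambda>x. proj I sp b (bd x))"

definition based_chain_complex ::
  "'a set \<Rightarrow> ('a \<Rightarrow> nat) \<Rightarrow> ('a \<Rightarrow> 'v::real_inner set) \<Rightarrow> ('v \<Rightarrow> 'v) \<Rightarrow> bool" where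
  "based_chain_complex I deg sp bd \<longleftrightarrow>
     finite I
   \<and> (\<forall>c\<in>I. subspace (sp c) \<and> (\<exists>B. finite B \<and> sp c = span B))
   \<and> (\<forall>f. (\<forall>c\<in>I. f c \<in> sp c) \<and> (\<Sum>c\<in>I. f c) = 0 \<longrightarrow> (\<forall>c\<in>I. f c = 0))
   \<and> linear bd
   \<and> (\<forall>n. \<forall>x\<in>chain_space I deg sp (Suc n). bd x \<in> chain_space I deg sp n)
   \<and> (\<forall>x\<in>chain_space I deg sp 0. bd x = 0)
   \<and> (\<forall>x\<in>total_space I sp. bd (bd x) = 0)"

definition edge :: "'a set \<Rightarrow> ('a \<Rightarrow> 'v::real_vector set) \<Rightarrow> ('v \<Rightarrow> 'v) \<Rightarrow> 'a \<Rightarrow> 'a \<Rightarrow> bool" where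
  "edge I sp bd a b \<longleftrightarrow> a \<in> I \<and> b \<in> I \<and> (\<exists>x\<in>sp a. blk I sp bd b a x \<noteq> 0)"

definition rstep :: "'a set \<Rightarrow> ('a \<Rightarrow> 'v::real_vector set) \<Rightarrow> ('v \<Rightarrow> 'v) \<Rightarrow> ('a \<times> 'a) set \<Rightarrow> 'a \<Rightarrow> 'a \<Rightarrow> bool" where
  "rstep I sp bd M a b \<longleftrightarrow> (edge I sp bd a b \<and> (a, b) \<notin> M) \<or> (b, a) \<in> M"

definition morse_matching ::
  "'a set \<Rightarrow> ('a \<Rightarrow> nat) \<Rightarrow> ('a \<Rightarrow> 'v::real_vector set) \<Rightarrow> ('v \<Rightarrow> 'v) \<Rightarrow> ('a \<times> 'a) set \<Rightarrow> bool" where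
  "morse_matching I deg sp bd M \<longleftrightarrow>
     (\<forall>(a, b)\<in>M. edge I sp bd a b)
   \<and> (\<forall>e1\<in>M. \<forall>e2\<in>M. {fst e1, snd e1} \<inter> {fst e2, snd e2} \<noteq> {} \<longrightarrow> e1 = e2)
   \<and> (\<forall>(a, b)\<in>M. bij_betw (blk I sp bd b a) (sp a) (sp b))
   \<and> (\<forall>n. partial_order_on {c\<in>I. deg c = n}
            {(a, b). a \<in> I \<and> deg a = n \<and> b \<in> I \<and> deg b = n \<and> (rstep I sp bd M)\<^sup>*\<^sup>* a b})"

definition nfree :: "('a \<Rightarrow> nat) \<Rightarrow> ('a \<times> 'a) set \<Rightarrow> nat \<Rightarrow> bool" where
  "nfree deg M n \<longleftrightarrow> \<not> (\<exists>(a, b)\<in>M. (deg a = n \<and> deg b + 1 = n) \<or> (deg b = n \<and> deg a + 1 = n))"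

definition critical :: "'a set \<Rightarrow> ('a \<times> 'a) set \<Rightarrow> 'a set" where
  "critical I M = {c \<in> I. \<forall>(a, b)\<in>M. c \<noteq> a \<and> c \<noteq> b}"

definition stepmap :: "'a set \<Rightarrow> ('a \<Rightarrow> 'v::real_vector set) \<Rightarrow> ('v \<Rightarrow> 'v) \<Rightarrow> ('a \<times> 'a) set \<Rightarrow> 'a \<Rightarrow> 'a \<Rightarrow> 'v \<Rightarrow> 'v" where
  "stepmap I sp bd M a b =
     (if (b, a) \<in> M then (\<lambda>x. - inv_into (sp b) (blk I sp bd a b) x) else blk I sp bd b a)"

fun pathmap :: "'a set \<Rightarrow> ('a \<Rightarrow> 'v::real_vector set) \<Rightarrow> ('v \<Rightarrow> 'v) \<Rightarrow> ('a \<times> 'a) set \<Rightarrow> 'a list \<Rightarrow> 'v \<Rightarrow> 'v" where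
  "pathmap I sp bd M [] = id"
| "pathmap I sp bd M [a] = id"
| "pathmap I sp bd M (a # b # p) = pathmap I sp bd M (b # p) \<circ> stepmap I sp bd M a b"

definition rpaths :: "'a set \<Rightarrow> ('a \<Rightarrow> 'v::real_vector set) \<Rightarrow> ('v \<Rightarrow> 'v) \<Rightarrow> ('a \<times> 'a) set \<Rightarrow> 'a \<Rightarrow> 'a \<Rightarrow> 'a list set" where
  "rpaths I sp bd M a b = {p. p \<noteq> [] \<and> hd p = a \<and> last p = b \<and> distinct p \<and> set p \<subseteq> I
      \<and> (\<forall>i. Suc i < length p \<longrightarrow> rstep I sp bd M (p ! i) (p ! Suc i))}"

definition Gamma :: "'a set \<Rightarrow> ('a \<Rightarrow> 'v::real_vector set) \<Rightarrow> ('v \<Rightarrow> 'v) \<Rightarrow> ('a \<times> 'a) set \<Rightarrow> 'a \<Rightarrow> 'a \<Rightarrow> 'v \<Rightarrow> 'v" where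
  "Gamma I sp bd M b a x = (\<Sum>p\<in>rpaths I sp bd M a b. pathmap I sp bd M p x)"

text \<open>Boundary of the Morse complex C^M (cells critical I M, same summands).\<close>
definition morse_bd :: "'a set \<Rightarrow> ('a \<Rightarrow> nat) \<Rightarrow> ('a \<Rightarrow> 'v::real_vector set) \<Rightarrow> ('v \<Rightarrow> 'v) \<Rightarrow> ('a \<times> 'a) set \<Rightarrow> 'v \<Rightarrow> 'v" where
  "morse_bd I deg sp bd M x =
     (\<Sum>a\<in>critical I M. \<Sum>b\<in>{b \<in> critical I M. deg b + 1 = deg a}.
        Gamma I sp bd M b a (proj (critical I M) sp a x))"

definition morse_Phi :: "'a set \<Rightarrow> ('a \<Rightarrow> nat) \<Rightarrow> ('a \<Rightarrow> 'v::real_vector set) \<Rightarrow> ('v \<Rightarrow> 'v) \<Rightarrow> ('a \<times> 'a) set \<Rightarrow> 'v \<Rightarrow> 'v" where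
  "morse_Phi I deg sp bd M x =
     (\<Sum>a\<in>critical I M. \<Sum>b\<in>{b \<in> I. deg b = deg a}.
        Gamma I sp bd M b a (proj (critical I M) sp a x))"

definition morse_Psi :: "'a set \<Rightarrow> ('a \<Rightarrow> nat) \<Rightarrow> ('a \<Rightarrow> 'v::real_vector set) \<Rightarrow> ('v \<Rightarrow> 'v) \<Rightarrow> ('a \<times> 'a) set \<Rightarrow> 'v \<Rightarrow> 'v" where
  "morse_Psi I deg sp bd M x =
     (\<Sum>a\<in>I. \<Sum>b\<in>{b \<in> critical I M. deg b = deg a}.
        Gamma I sp bd M b a (proj I sp a x))"

definition topo_loss :: "('v \<Rightarrow> 'w) \<Rightarrow> ('w \<Rightarrow> 'v::real_normed_vector) \<Rightarrow> 'v \<Rightarrow> real" where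
  "topo_loss Psi Phi s = norm (s - Phi (Psi s))"

end

theory Submission imports Defs begin

text \<open>
  Because \<open>M\<close> is \<open>(n,n-1)\<close>-free, a path of the reversed graph that leaves a critical
  \<open>n\<close>-cell first follows an ordinary edge down to degree \<open>n-1\<close> and can never climb back to
  degree \<open>n\<close>. So the only path between critical \<open>n\<close>-cells is the trivial one, and \<open>\<Phi>\<close> is
  the identity on degree-\<open>n\<close> chains of \<open>C\<^sup>M\<close> (which live in the same ambient space as
  \<open>C\<close>). Both \<open>\<Psi> s\<close> and \<open>\<Phi>' \<Psi>' \<Psi> s\<close> are such chains, so the left-hand side is
  \<open>\<parallel>s - \<Phi>' \<Psi>' \<Psi> s\<parallel>\<close> and the claim is the triangle inequality through \<open>\<Psi> s\<close>.
\<close>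

lemma successively_iff_nth:
  "successively P xs \<longleftrightarrow> (\<forall>i. Suc i < length xs \<longrightarrow> P (xs ! i) (xs ! Suc i))"
proof (induction xs rule: induct_list012)
  case (3 x y zs)
  have "(\<forall>i. Suc i < length (x # y # zs) \<longrightarrow> P ((x # y # zs) ! i) ((x # y # zs) ! Suc i))
      \<longleftrightarrow> P x y \<and> (\<forall>i. Suc i < length (y # zs) \<longrightarrow> P ((y # zs) ! i) ((y # zs) ! Suc i))"
    by (auto simp: All_less_Suc2 less_Suc_eq_0_disj)
  then show ?case using "3.IH"(2) by simp
qed simp_all

lemma chain_space_eq_span: "chain_space K deg sp n = span (\<Union>(sp ` {c \<in> K. deg c = n}))"
  unfolding chain_space_def by (rule arg_cong[where f = span]) blast

lemma summand_subset_chain_space: "c \<in> K \<Longrightarrow> sp c \<subseteq> chain_space K deg sp (deg c)"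
  unfolding chain_space_eq_span by (auto intro: span_base)

lemma chain_space_subspace: "subspace (chain_space K deg sp n)"
  unfolding chain_space_def by (rule subspace_span)

lemma chain_space_subset_total_space: "chain_space K deg sp n \<subseteq> total_space K sp"
  unfolding chain_space_eq_span total_space_def by (rule span_mono) blast

lemma critical_subset: "critical K M \<subseteq> K"
  unfolding critical_def by blast

locale direct_sum_family =
  fixes K :: "'a set" and sp :: "'a \<Rightarrow> 'v::real_vector set"
  assumes finite_index: "finite K"
    and subspace_summand: "c \<in> K \<Longrightarrow> subspace (sp c)"
    and summands_independent:
      "(\<And>c. c \<in> K \<Longrightarrow> f c \<in> sp c) \<Longrightarrow> sum f K = 0 \<Longrightarrow> c \<in> K \<Longrightarrow> f c = 0"
begin

lemma zero_in_summand: "c \<in> K \<Longrightarrow> 0 \<in> sp c"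
  using subspace_0 subspace_summand by blast

lemma subfamily: assumes "J \<subseteq> K" shows "direct_sum_family J sp"
proof
  show "finite J" using assms finite_index finite_subset by blast
  show "c \<in> J \<Longrightarrow> subspace (sp c)" for c using assms subspace_summand by blast
next
  fix f c assume f: "\<And>c. c \<in> J \<Longrightarrow> f c \<in> sp c" and sum: "sum f J = 0" and c: "c \<in> J"
  define g where "g c = (if c \<in> J then f c else 0)" for c
  have g_sum: "sum g K = 0"
    using sum by (simp add: g_def sum.mono_neutral_cong_right[OF finite_index assms])
  have g_summand: "g c \<in> sp c" if "c \<in> K" for c
    using f zero_in_summand that by (simp add: g_def)
  have "g c = 0"
    using summands_independent[of g c, OF g_summand g_sum] c assms by blast
  then show "f c = 0" using c by (simp add: g_def)
qed

lemma decomposition_exists: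
  assumes "J \<subseteq> K" and "z \<in> span (\<Union>(sp ` J))"
  obtains f where "\<And>c. c \<in> K \<Longrightarrow> f c \<in> sp c" "\<And>c. c \<notin> J \<Longrightarrow> f c = 0" "z = sum f K"
proof -
  have "\<exists>f. (\<forall>c\<in>K. f c \<in> sp c) \<and> (\<forall>c. c \<notin> J \<longrightarrow> f c = 0) \<and> z = sum f K"
    using assms(2)
  proof (induction rule: span_induct_alt)
    case base
    show ?case by (rule exI[of _ "\<lambda>_. 0"]) (simp add: zero_in_summand)
  next
    case (step r x y)
    then obtain d where d: "d \<in> J" "x \<in> sp d" by blast
    from step.IH obtain f where f: "\<forall>c\<in>K. f c \<in> sp c" "\<forall>c. c \<notin> J \<longrightarrow> f c = 0" "y = sum f K"
      by blast
    define g where "g c = f c + (if c = d then r *\<^sub>R x else 0)" for c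
    have "\<forall>c\<in>K. g c \<in> sp c"
      using f(1) d assms(1) zero_in_summand
      by (auto simp: g_def intro: subspace_add subspace_scale subspace_summand)
    moreover have "sum g K = r *\<^sub>R x + sum f K"
      using d assms(1) finite_index by (auto simp: g_def sum.distrib)
    ultimately show ?case using f d by (intro exI[of _ g]) (auto simp: g_def)
  qed
  then show thesis using that by blast
qed

lemma proj_component:
  assumes "\<And>c. c \<in> K \<Longrightarrow> f c \<in> sp c" and "\<And>c. c \<notin> K \<Longrightarrow> f c = 0"
  shows "proj K sp b (sum f K) = f b"
proof -
  have "(THE g. (\<forall>c\<in>K. g c \<in> sp c) \<and> (\<forall>c. c \<notin> K \<longrightarrow> g c = 0) \<and> sum f K = sum g K) = f"
  proof (rule the_equality)
    fix g assume g: "(\<forall>c\<in>K. g c \<in> sp c) \<and> (\<forall>c. c \<notin> K \<longrightarrow> g c = 0) \<and> sum f K = sum g K"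
    have "g c - f c = 0" if "c \<in> K" for c
    proof (rule summands_independent[OF _ _ that])
      show "g c - f c \<in> sp c" if "c \<in> K" for c
        using g assms(1) that by (simp add: subspace_diff subspace_summand)
      show "(\<Sum>c\<in>K. g c - f c) = 0"
        using g by (simp add: sum_subtractf)
    qed
    then show "g = f" using g assms(2) by fastforce
  qed (use assms in auto)
  then show ?thesis unfolding proj_def by simp
qed

lemma proj_eq_0_outside:
  assumes "J \<subseteq> K" "z \<in> span (\<Union>(sp ` J))" "b \<notin> J"
  shows "proj K sp b z = 0"
proof -
  obtain f where "\<And>c. c \<in> K \<Longrightarrow> f c \<in> sp c" "\<And>c. c \<notin> J \<Longrightarrow> f c = 0" "z = sum f K"
    using decomposition_exists assms(1,2) by blast
  then show ?thesis using proj_component[of f b] assms by auto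
qed

lemma proj_0: "proj K sp b 0 = 0"
  using proj_eq_0_outside[of "{}"] by (simp add: span_zero)

lemma proj_in_summand:
  assumes "z \<in> total_space K sp" "b \<in> K"
  shows "proj K sp b z \<in> sp b"
proof -
  obtain f where "\<And>c. c \<in> K \<Longrightarrow> f c \<in> sp c" "\<And>c. c \<notin> K \<Longrightarrow> f c = 0" "z = sum f K"
    using decomposition_exists[of K z] assms(1) unfolding total_space_def by blast
  then show ?thesis using proj_component[of f b] assms(2) by auto
qed

lemma sum_proj:
  assumes "z \<in> total_space K sp"
  shows "(\<Sum>c\<in>K. proj K sp c z) = z"
proof -
  obtain f where "\<And>c. c \<in> K \<Longrightarrow> f c \<in> sp c" "\<And>c. c \<notin> K \<Longrightarrow> f c = 0" "z = sum f K"
    using decomposition_exists[of K z] assms unfolding total_space_def by blast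
  then show ?thesis using proj_component[of f] by simp
qed

lemma proj_chain_space_other_degree:
  assumes "x \<in> chain_space K deg sp n" "deg a \<noteq> n"
  shows "proj K sp a x = 0"
  using assms proj_eq_0_outside[of "{c \<in> K. deg c = n}"] by (auto simp: chain_space_eq_span)

end

locale boundary_system = direct_sum_family K sp
  for K :: "'a set" and sp :: "'a \<Rightarrow> 'v::real_vector set" +
  fixes bd :: "'v \<Rightarrow> 'v"
  assumes bd_summand: "c \<in> K \<Longrightarrow> v \<in> sp c \<Longrightarrow> bd v \<in> total_space K sp"
    and bd_0: "bd 0 = 0"
begin

lemma blk_summand: "a \<in> K \<Longrightarrow> b \<in> K \<Longrightarrow> v \<in> sp a \<Longrightarrow> blk K sp bd b a v \<in> sp b"
  unfolding blk_def by (intro proj_in_summand bd_summand)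

lemma blk_0: "blk K sp bd b a 0 = 0"
  by (simp add: blk_def bd_0 proj_0)

end

locale morse_system = boundary_system K sp bd
  for K :: "'a set" and sp :: "'a \<Rightarrow> 'v::real_vector set" and bd +
  fixes deg :: "'a \<Rightarrow> nat" and M :: "('a \<times> 'a) set"
  assumes matching: "morse_matching K deg sp bd M"
begin

lemma matched_edge: "(a, b) \<in> M \<Longrightarrow> edge K sp bd a b"
  using matching unfolding morse_matching_def by blast

lemma matched_bij: "(a, b) \<in> M \<Longrightarrow> bij_betw (blk K sp bd b a) (sp a) (sp b)"
  using matching unfolding morse_matching_def by blast

lemma rstep_cells: "rstep K sp bd M a b \<Longrightarrow> a \<in> K \<and> b \<in> K"
  using matched_edge unfolding rstep_def edge_def by blast

lemma stepmap_summand: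
  assumes "rstep K sp bd M a b" "v \<in> sp a"
  shows "stepmap K sp bd M a b v \<in> sp b"
proof (cases "(b, a) \<in> M")
  case True
  then have "blk K sp bd a b ` sp b = sp a"
    using matched_bij bij_betw_imp_surj_on by blast
  then have "inv_into (sp b) (blk K sp bd a b) v \<in> sp b"
    using assms(2) by (metis inv_into_into)
  then show ?thesis
    using True rstep_cells[OF assms(1)] by (simp add: stepmap_def subspace_neg subspace_summand)
next
  case False
  then show ?thesis
    using assms rstep_cells[OF assms(1)] by (simp add: stepmap_def blk_summand)
qed

lemma stepmap_0: "stepmap K sp bd M a b 0 = 0"
proof (cases "(b, a) \<in> M")
  case True
  then have "b \<in> K" "inj_on (blk K sp bd a b) (sp b)"
    using matched_edge[of b a] matched_bij[of b a] by (auto simp: edge_def bij_betw_def)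
  then have "inv_into (sp b) (blk K sp bd a b) 0 = 0"
    by (intro inv_into_f_eq zero_in_summand blk_0)
  then show ?thesis using True by (simp add: stepmap_def)
qed (simp add: stepmap_def blk_0)

lemma pathmap_summand:
  "successively (rstep K sp bd M) p \<Longrightarrow> p \<noteq> [] \<Longrightarrow> v \<in> sp (hd p)
    \<Longrightarrow> pathmap K sp bd M p v \<in> sp (last p)"
proof (induction p arbitrary: v rule: induct_list012)
  case (3 x y zs)
  then have "stepmap K sp bd M x y v \<in> sp y" by (simp add: stepmap_summand)
  then show ?case using "3.IH"(2) "3.prems"(1) by simp
qed simp_all

lemma pathmap_0: "pathmap K sp bd M p 0 = 0"
  by (induction p rule: induct_list012) (simp_all add: stepmap_0)

lemma rpaths_walk:
  "p \<in> rpaths K sp bd M a b \<Longrightarrow>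
    successively (rstep K sp bd M) p \<and> p \<noteq> [] \<and> hd p = a \<and> last p = b"
  unfolding rpaths_def successively_iff_nth by blast

lemma Gamma_summand:
  assumes "b \<in> K" "v \<in> sp a"
  shows "Gamma K sp bd M b a v \<in> sp b"
proof -
  have "pathmap K sp bd M p v \<in> sp b" if "p \<in> rpaths K sp bd M a b" for p
    using pathmap_summand[of p v] rpaths_walk[OF that] assms(2) by auto
  then show ?thesis
    unfolding Gamma_def using assms(1) by (intro subspace_sum subspace_summand)
qed

lemma Gamma_0: "Gamma K sp bd M b a 0 = 0"
  by (simp add: Gamma_def pathmap_0)

lemma Gamma_proj_chain_space:
  assumes L: "direct_sum_family L sp" and x: "x \<in> chain_space L deg sp n"
    and a: "a \<in> L" and b: "b \<in> L'" "L' \<subseteq> K" "deg b = deg a"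
  shows "Gamma K sp bd M b a (proj L sp a x) \<in> chain_space L' deg sp n"
proof (cases "deg a = n")
  case True
  have "proj L sp a x \<in> sp a"
    using x a chain_space_subset_total_space direct_sum_family.proj_in_summand[OF L] by blast
  then have "Gamma K sp bd M b a (proj L sp a x) \<in> sp b"
    using b by (intro Gamma_summand) auto
  moreover have "sp b \<subseteq> chain_space L' deg sp n"
    using summand_subset_chain_space[of b L' sp deg] b True by simp
  ultimately show ?thesis by blast
next
  case False
  then show ?thesis
    using direct_sum_family.proj_chain_space_other_degree[OF L x]
    by (simp add: Gamma_0 chain_space_eq_span span_zero)
qed

lemma critical_family: "direct_sum_family (critical K M) sp"
  by (rule subfamily[OF critical_subset])

lemma morse_Psi_chain_space:
  "x \<in> chain_space K deg sp n \<Longrightarrow> morse_Psi K deg sp bd M x \<in> chain_space (critical K M) deg sp n"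
  unfolding morse_Psi_def
  by (intro subspace_sum[OF chain_space_subspace]
      Gamma_proj_chain_space[OF direct_sum_family_axioms] critical_subset) auto

lemma morse_Phi_chain_space:
  "x \<in> chain_space (critical K M) deg sp n \<Longrightarrow> morse_Phi K deg sp bd M x \<in> chain_space K deg sp n"
  unfolding morse_Phi_def
  by (intro subspace_sum[OF chain_space_subspace] Gamma_proj_chain_space[OF critical_family]) auto

end

lemma based_chain_complex_bd_chain_space:
  "based_chain_complex I deg sp bd \<Longrightarrow> x \<in> chain_space I deg sp (Suc n)
    \<Longrightarrow> bd x \<in> chain_space I deg sp n"
  unfolding based_chain_complex_def by blast

lemma based_chain_complex_bd_bottom:
  "based_chain_complex I deg sp bd \<Longrightarrow> x \<in> chain_space I deg sp 0 \<Longrightarrow> bd x = 0"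
  unfolding based_chain_complex_def by blast

lemma based_chain_complex_boundary_system:
  assumes C: "based_chain_complex I deg sp bd"
  shows "boundary_system I sp bd"
proof -
  interpret direct_sum_family I sp
    using C unfolding based_chain_complex_def by unfold_locales auto
  show ?thesis
  proof
    fix c v assume "c \<in> I" "v \<in> sp c"
    then have v: "v \<in> chain_space I deg sp (deg c)"
      using summand_subset_chain_space[of c I sp deg] by blast
    show "bd v \<in> total_space I sp"
    proof (cases "deg c")
      case 0
      then show ?thesis
        using based_chain_complex_bd_bottom[OF C] v by (simp add: total_space_def span_zero)
    next
      case (Suc m)
      then show ?thesis
        using based_chain_complex_bd_chain_space[OF C] v chain_space_subset_total_space[of I deg sp m]
        by auto
    qed
  next
    show "bd 0 = 0" using C linear_0 unfolding based_chain_complex_def by blast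
  qed
qed

lemma based_chain_complex_morse_system:
  "based_chain_complex I deg sp bd \<Longrightarrow> morse_matching I deg sp bd M \<Longrightarrow> morse_system I sp bd deg M"
  by (rule morse_system.intro[OF based_chain_complex_boundary_system morse_system_axioms.intro])

lemma edge_degree:
  assumes C: "based_chain_complex I deg sp bd" and e: "edge I sp bd a b"
  shows "deg b + 1 = deg a"
proof -
  interpret boundary_system I sp bd
    using based_chain_complex_boundary_system[OF C] .
  obtain x where x: "x \<in> sp a" and nz: "proj I sp b (bd x) \<noteq> 0" and "a \<in> I"
    using e unfolding edge_def blk_def by blast
  then have x_chain: "x \<in> chain_space I deg sp (deg a)"
    using summand_subset_chain_space[of a I sp deg] by blast
  show ?thesis
  proof (cases "deg a")
    case 0
    then have "bd x = 0" using based_chain_complex_bd_bottom[OF C] x_chain by simp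
    then show ?thesis using nz proj_0 by simp
  next
    case (Suc m)
    then have "bd x \<in> chain_space I deg sp m"
      using based_chain_complex_bd_chain_space[OF C] x_chain by simp
    then show ?thesis using nz Suc proj_chain_space_other_degree by fastforce
  qed
qed

lemma morse_bd_boundary_system:
  assumes C: "based_chain_complex I deg sp bd" and M: "morse_matching I deg sp bd M"
  shows "boundary_system (critical I M) sp (morse_bd I deg sp bd M)"
proof -
  interpret morse_system I sp bd deg M
    using based_chain_complex_morse_system[OF C M] .
  interpret critical: direct_sum_family "critical I M" sp
    by (rule critical_family)
  show ?thesis
  proof
    fix c v assume "c \<in> critical I M" "v \<in> sp c"
    then have v: "v \<in> total_space (critical I M) sp"
      unfolding total_space_def by (auto intro: span_base)
    show "morse_bd I deg sp bd M v \<in> total_space (critical I M) sp"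
      unfolding morse_bd_def total_space_def
    proof (intro span_sum)
      fix a b assume a: "a \<in> critical I M" and b: "b \<in> {b \<in> critical I M. deg b + 1 = deg a}"
      then have "Gamma I sp bd M b a (proj (critical I M) sp a v) \<in> sp b"
        using v critical_subset[of I M] by (intro Gamma_summand critical.proj_in_summand) auto
      then show "Gamma I sp bd M b a (proj (critical I M) sp a v) \<in> span (\<Union>(sp ` critical I M))"
        using b by (auto intro: span_base)
    qed
  next
    show "morse_bd I deg sp bd M 0 = 0"
      by (simp add: morse_bd_def critical.proj_0 Gamma_0)
  qed
qed

lemma rstep_preserves_degree_below:
  assumes C: "based_chain_complex I deg sp bd" and M: "morse_matching I deg sp bd M"
    and free: "nfree deg M n" and step: "rstep I sp bd M x y" and x: "deg x < n"
  shows "deg y < n"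
proof (cases "(y, x) \<in> M")
  case True
  then have "deg x + 1 = deg y"
    using M edge_degree[OF C] unfolding morse_matching_def by blast
  moreover have "\<not> (deg y = n \<and> deg x + 1 = n)"
    using free True unfolding nfree_def by blast
  ultimately show ?thesis using x by linarith
next
  case False
  then have "deg y + 1 = deg x"
    using step edge_degree[OF C] unfolding rstep_def by blast
  then show ?thesis using x by linarith
qed

lemma walk_stays_below_degree:
  assumes C: "based_chain_complex I deg sp bd" and M: "morse_matching I deg sp bd M"
    and free: "nfree deg M n"
  shows "successively (rstep I sp bd M) p \<Longrightarrow> p \<noteq> [] \<Longrightarrow> deg (hd p) < n \<Longrightarrow> deg (last p) < n"
proof (induction p rule: induct_list012)
  case (3 x y zs)
  then have "deg y < n" using rstep_preserves_degree_below[OF C M free] by fastforce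
  then show ?case using "3.IH"(2) "3.prems"(1) by simp
qed simp_all

lemma rpaths_from_critical:
  assumes C: "based_chain_complex I deg sp bd" and M: "morse_matching I deg sp bd M"
    and free: "nfree deg M (deg a)" and a: "a \<in> critical I M" and b: "deg b = deg a"
  shows "rpaths I sp bd M a b = (if b = a then {[a]} else {})"
proof -
  interpret morse_system I sp bd deg M
    using based_chain_complex_morse_system[OF C M] .
  have only_trivial: "p = [a] \<and> b = a" if p: "p \<in> rpaths I sp bd M a b" for p
  proof -
    note walk = rpaths_walk[OF p]
    obtain q where p_eq: "p = a # q" using walk by (cases p) auto
    show ?thesis
    proof (cases q)
      case Nil
      then show ?thesis using walk p_eq by simp
    next
      case (Cons y r)
      then have steps: "rstep I sp bd M a y" "successively (rstep I sp bd M) (y # r)"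
        and "last (y # r) = b"
        using walk p_eq by auto
      have "(y, a) \<notin> M" using a unfolding critical_def by blast
      then have "deg y < deg a"
        using steps(1) edge_degree[OF C] unfolding rstep_def by fastforce
      then have "deg b < deg a"
        using walk_stays_below_degree[OF C M free steps(2)] \<open>last (y # r) = b\<close> by simp
      then show ?thesis using b by simp
    qed
  qed
  show ?thesis
  proof (cases "b = a")
    case True
    have "rpaths I sp bd M a b = {[a]}"
    proof
      show "rpaths I sp bd M a b \<subseteq> {[a]}" using only_trivial by blast
      show "{[a]} \<subseteq> rpaths I sp bd M a b"
        using True a critical_subset[of I M] unfolding rpaths_def by auto
    qed
    then show ?thesis using True by simp
  next
    case False
    then have "rpaths I sp bd M a b = {}" using only_trivial by blast
    then show ?thesis using False by simp
  qed
qed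

lemma morse_Phi_eq_self:
  assumes C: "based_chain_complex I deg sp bd" and M: "morse_matching I deg sp bd M"
    and free: "nfree deg M n" and w: "w \<in> chain_space (critical I M) deg sp n"
  shows "morse_Phi I deg sp bd M w = w"
proof -
  interpret morse_system I sp bd deg M
    using based_chain_complex_morse_system[OF C M] .
  interpret critical: direct_sum_family "critical I M" sp
    by (rule critical_family)
  have "(\<Sum>b\<in>{b \<in> I. deg b = deg a}. Gamma I sp bd M b a (proj (critical I M) sp a w))
        = proj (critical I M) sp a w" if a: "a \<in> critical I M" for a
  proof (cases "deg a = n")
    case True
    then have "Gamma I sp bd M b a v = (if b = a then v else 0)" if "deg b = deg a" for b v
      using rpaths_from_critical[OF C M _ a that] free by (simp add: Gamma_def)
    then show ?thesis
      using a critical_subset[of I M] finite_index by (simp add: sum.delta subset_iff)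
  next
    case False
    then show ?thesis
      using critical.proj_chain_space_other_degree[OF w] by (simp add: Gamma_0)
  qed
  then have "morse_Phi I deg sp bd M w = (\<Sum>a\<in>critical I M. proj (critical I M) sp a w)"
    unfolding morse_Phi_def by (rule sum.cong[OF refl])
  also have "\<dots> = w"
    using w chain_space_subset_total_space by (intro critical.sum_proj) blast
  finally show ?thesis .
qed

theorem mainTheorem16:
  fixes I :: "'a set" and deg :: "'a \<Rightarrow> nat" and sp :: "'a \<Rightarrow> 'v::real_inner set"
    and bd :: "'v \<Rightarrow> 'v" and M M' :: "('a \<times> 'a) set" and n :: nat and s :: 'v
  assumes C: "based_chain_complex I deg sp bd"
    and M: "morse_matching I deg sp bd M" and Mfree: "nfree deg M n"
    and M': "morse_matching (critical I M) deg sp (morse_bd I deg sp bd M) M'"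
    and M'free: "nfree deg M' n"
    and s: "s \<in> chain_space I deg sp n"
  shows "topo_loss
           (morse_Psi (critical I M) deg sp (morse_bd I deg sp bd M) M' \<circ> morse_Psi I deg sp bd M)
           (morse_Phi I deg sp bd M \<circ> morse_Phi (critical I M) deg sp (morse_bd I deg sp bd M) M') s
         \<le> topo_loss (morse_Psi I deg sp bd M) (morse_Phi I deg sp bd M) s
           + topo_loss (morse_Psi (critical I M) deg sp (morse_bd I deg sp bd M) M')
                       (morse_Phi (critical I M) deg sp (morse_bd I deg sp bd M) M')
                       (morse_Psi I deg sp bd M s)"
proof -
  interpret C: morse_system I sp bd deg M
    using based_chain_complex_morse_system[OF C M] .
  interpret D: morse_system "critical I M" sp "morse_bd I deg sp bd M" deg M'
    using morse_bd_boundary_system[OF C M] M' by (rule morse_system.intro[OF _ morse_system_axioms.intro])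
  define t where "t = morse_Psi I deg sp bd M s"
  define u where "u = morse_Phi (critical I M) deg sp (morse_bd I deg sp bd M) M'
                        (morse_Psi (critical I M) deg sp (morse_bd I deg sp bd M) M' t)"
  have t: "t \<in> chain_space (critical I M) deg sp n"
    unfolding t_def using s by (rule C.morse_Psi_chain_space)
  have u: "u \<in> chain_space (critical I M) deg sp n"
    unfolding u_def using t by (intro D.morse_Phi_chain_space D.morse_Psi_chain_space)
  have "norm (s - u) \<le> norm (s - t) + norm (t - u)"
    using norm_triangle_ineq[of "s - t" "t - u"] by simp
  then show ?thesis
    unfolding topo_loss_def o_def t_def[symmetric] u_def[symmetric]
    using morse_Phi_eq_self[OF C M Mfree] t u by simp
qed

end
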